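(* Let $d\ge 1$ be an odd integer, $p\ge 0$ an integer, and $M\ge 1$ an integer with $2M+1\ge d+p+1$. Let $\gamma:[0,\pi]\to[0,\infty)$ be an integrable weighting function that is positive on a subset of $[0,\pi]$ of positive measure. For $\mathbf a=(a_{-M},\dots,a_M)\in\mathbb R^{2M+1}$ define the spectral error $$e(\eta)=\sum_{m=-M}^{M}a_m e^{jm\eta}-(j\eta)^d,\qquad \eta\in[0,\pi],\ j=\sqrt{-1}.$$ Let $\mathbf a^\ast$ be a minimizer of $$\int_0^\pi \gamma(\eta)\,|e(\eta)|^2\,d\eta$$ over all $\mathbf a\in\mathbb R^{2M+1}$ satisfying the order-of-accuracy constraints $$\sum_{m=-M}^{M} m^q a_m=\begin{cases}0,& q\neq d,\\ d!,& q=d,\end{cases}\qquad q=0,1,\dots,d+p .$$ Then the spectral error of $\mathbf a^\ast$ satisfies $\operatorname{Re}[e(\eta)]=0$ for all $\eta\in[0,\pi]$ (equivalently $\sum_m a^\ast_m\cos(m\eta)\equiv 0$).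
   Context: This concerns explicit finite difference approximations $f^{(d)}(x_i)\approx (\Delta x)^{-d}\sum_{m=-M}^{M}a_m f(x_i+m\Delta x)$ of the $d$-th derivative on a uniform grid with spacing $\Delta x$; $\eta=k\Delta x$ is the normalized wavenumber. The constraints express that the approximation has truncation error of order $p+1$. Here $0^0=1$. *)

theory Defs
  imports "HOL-Analysis.Analysis"
begin

text \<open>Coefficients a_m, m = -M..M, are represented by a function int => real;
only the values on {-M..M} matter.\<close>

definition spec_err :: "nat \<Rightarrow> nat \<Rightarrow> (int \<Rightarrow> real) \<Rightarrow> real \<Rightarrow> complex" where
  "spec_err M d a \<eta> =
     (\<Sum>m\<in>{-int M..int M}. complex_of_real (a m) * exp (\<i> * of_int m * complex_of_real \<eta>))
     - (\<i> * complex_of_real \<eta>) ^ d"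

definition order_constraints :: "nat \<Rightarrow> nat \<Rightarrow> nat \<Rightarrow> (int \<Rightarrow> real) \<Rightarrow> bool" where
  "order_constraints M d p a \<longleftrightarrow>
     (\<forall>q\<le>d + p. (\<Sum>m\<in>{-int M..int M}. real_of_int m ^ q * a m) = (if q = d then fact d else 0))"

definition weighted_error :: "(real \<Rightarrow> real) \<Rightarrow> nat \<Rightarrow> nat \<Rightarrow> (int \<Rightarrow> real) \<Rightarrow> real" where
  "weighted_error \<gamma> M d a = integral {0..pi} (\<lambda>\<eta>. \<gamma> \<eta> * (cmod (spec_err M d a \<eta>))\<^sup>2)"

end

(* Replacing a by its odd part (a m - a (-m)) / 2 keeps the order constraints, because d is odd
   and the constraint of every even order q has right-hand side 0. It also keeps the imaginary part
   of the spectral error and kills its real part, the cosine sum of a. Hence the weighted error of a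
   exceeds that of its odd part by the integral of gamma times the squared cosine sum, so minimality
   forces gamma times the squared cosine sum to vanish almost everywhere. A cosine sum is a
   polynomial in cos, so unless it vanishes identically it has only finitely many zeros in [0, pi];
   then gamma would vanish almost everywhere, contradicting the positive measure of its support. *)
theory Submission
  imports Defs "HOL-Computational_Algebra.Polynomial"
begin

fun chebyshev :: "nat \<Rightarrow> real poly" where
  "chebyshev 0 = 1"
| "chebyshev (Suc 0) = [:0, 1:]"
| "chebyshev (Suc (Suc n)) = [:0, 2:] * chebyshev (Suc n) - chebyshev n"

lemma cos_mult_eq_poly_chebyshev: "cos (real n * x) = poly (chebyshev n) (cos x)"
proof (induction n rule: chebyshev.induct)
  case (3 n)
  have "cos (real (Suc (Suc n)) * x) = cos (real (Suc n) * x + x)"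
    by (simp add: algebra_simps)
  also have "\<dots> = 2 * cos x * cos (real (Suc n) * x) - cos (real (Suc n) * x - x)"
    by (simp add: cos_add cos_diff)
  also have "real (Suc n) * x - x = real n * x"
    by (simp add: algebra_simps)
  finally show ?case
    using "3.IH" by simp
qed simp_all

lemma finite_zeros_cosine_sum:
  fixes c :: "int \<Rightarrow> real"
  assumes "(\<Sum>m\<in>I. c m * cos (of_int m * x\<^sub>0)) \<noteq> 0"
  shows "finite {x \<in> {0..pi}. (\<Sum>m\<in>I. c m * cos (of_int m * x)) = 0}"
    (is "finite ?Z")
proof -
  define P where "P = (\<Sum>m\<in>I. smult (c m) (chebyshev (nat \<bar>m\<bar>)))"
  have cos_abs: "cos (of_int m * x) = cos (real (nat \<bar>m\<bar>) * x)" for m :: int and x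
    by (cases "m \<ge> 0") simp_all
  have sum_eq_poly: "(\<Sum>m\<in>I. c m * cos (of_int m * x)) = poly P (cos x)" for x
    unfolding P_def poly_sum
    by (intro sum.cong refl) (simp only: poly_smult cos_abs cos_mult_eq_poly_chebyshev)
  then have "P \<noteq> 0"
    using assms by auto
  then have "finite {y. poly P y = 0}"
    by (rule poly_roots_finite)
  moreover have "cos ` ?Z \<subseteq> {y. poly P y = 0}"
    using sum_eq_poly by auto
  ultimately have "finite (cos ` ?Z)"
    by (rule finite_subset[rotated])
  moreover have "inj_on cos ?Z"
    by (auto intro!: inj_onI cos_inj_pi)
  ultimately show ?thesis
    by (rule finite_imageD)
qed

lemma cosine_sum_eq_0_if_weighted_square_negligible:
  fixes c :: "int \<Rightarrow> real" and \<gamma> :: "real \<Rightarrow> real"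
  assumes "emeasure lebesgue {y \<in> {0..pi}. \<gamma> y > 0} > 0"
    and "negligible {y \<in> {0..pi}. \<gamma> y * (\<Sum>m\<in>I. c m * cos (of_int m * y))\<^sup>2 \<noteq> 0}"
  shows "(\<Sum>m\<in>I. c m * cos (of_int m * x)) = 0"
proof (rule ccontr)
  let ?C = "\<lambda>y. \<Sum>m\<in>I. c m * cos (of_int m * y)"
  assume "?C x \<noteq> 0"
  then have "finite {y \<in> {0..pi}. ?C y = 0}"
    by (rule finite_zeros_cosine_sum)
  then have "negligible ({y \<in> {0..pi}. \<gamma> y * (?C y)\<^sup>2 \<noteq> 0} \<union> {y \<in> {0..pi}. ?C y = 0})"
    using assms(2) by (simp add: negligible_finite)
  moreover have "{y \<in> {0..pi}. \<gamma> y > 0} \<subseteq> {y \<in> {0..pi}. \<gamma> y * (?C y)\<^sup>2 \<noteq> 0} \<union> {y \<in> {0..pi}. ?C y = 0}"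
    by auto
  ultimately have "{y \<in> {0..pi}. \<gamma> y > 0} \<in> null_sets lebesgue"
    using negligible_iff_null_sets negligible_subset by blast
  then have "emeasure lebesgue {y \<in> {0..pi}. \<gamma> y > 0} = 0"
    by (rule null_setsD1)
  then show False
    using assms(1) by simp
qed

definition odd_part :: "(int \<Rightarrow> real) \<Rightarrow> int \<Rightarrow> real" where
  "odd_part a m = (a m - a (- m)) / 2"

lemma sum_symmetric_interval_reflect:
  "(\<Sum>m\<in>{-k..k::int}. f (- m)) = (\<Sum>m\<in>{-k..k}. f m)"
  by (rule sum.reindex_bij_witness[of _ uminus uminus]) auto

lemma sum_odd_part_mult:
  "(\<Sum>m\<in>{-k..k}. odd_part a m * g m) = (\<Sum>m\<in>{-k..k}. a m * (g m - g (- m))) / 2"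
proof -
  have "(\<Sum>m\<in>{-k..k}. odd_part a m * g m) =
          ((\<Sum>m\<in>{-k..k}. a m * g m) - (\<Sum>m\<in>{-k..k}. a (- m) * g m)) / 2"
    by (simp add: odd_part_def sum_subtractf sum_divide_distrib[symmetric] left_diff_distrib)
  also have "(\<Sum>m\<in>{-k..k}. a (- m) * g m) = (\<Sum>m\<in>{-k..k}. a m * g (- m))"
    using sum_symmetric_interval_reflect[of "\<lambda>m. a m * g (- m)" k] by simp
  finally show ?thesis
    by (simp add: sum_subtractf right_diff_distrib)
qed

lemma sum_odd_part_mult_even:
  assumes "\<And>m. g (- m) = g m"
  shows "(\<Sum>m\<in>{-k..k}. odd_part a m * g m) = 0"
  unfolding sum_odd_part_mult assms by simp

lemma sum_odd_part_mult_odd: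
  assumes "\<And>m. g (- m) = - g m"
  shows "(\<Sum>m\<in>{-k..k}. odd_part a m * g m) = (\<Sum>m\<in>{-k..k}. a m * g m)"
  unfolding sum_odd_part_mult assms by (simp add: sum_distrib_left ac_simps)

lemma order_constraints_odd_part:
  assumes "odd d" and "order_constraints M d p a"
  shows "order_constraints M d p (odd_part a)"
  unfolding order_constraints_def
proof (intro allI impI)
  fix q assume "q \<le> d + p"
  then have moment: "(\<Sum>m\<in>{-int M..int M}. real_of_int m ^ q * a m) = (if q = d then fact d else 0)"
    using assms(2) unfolding order_constraints_def by blast
  show "(\<Sum>m\<in>{-int M..int M}. real_of_int m ^ q * odd_part a m) = (if q = d then fact d else 0)"
  proof (cases "even q")
    case True
    then have "q \<noteq> d"
      using assms(1) by auto
    with True show ?thesis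
      using sum_odd_part_mult_even[where g = "\<lambda>m. real_of_int m ^ q" and k = "int M" and a = a]
      by (simp add: mult.commute)
  next
    case False
    then show ?thesis
      using sum_odd_part_mult_odd[where g = "\<lambda>m. real_of_int m ^ q" and k = "int M" and a = a] moment
      by (simp add: mult.commute)
  qed
qed

lemma Re_imaginary_power_odd: "odd d \<Longrightarrow> Re ((\<i> * complex_of_real x) ^ d) = 0"
  by (auto elim!: oddE simp: power_mult_distrib power_mult)

lemma Re_spec_err:
  "odd d \<Longrightarrow> Re (spec_err M d a \<eta>) = (\<Sum>m\<in>{-int M..int M}. a m * cos (of_int m * \<eta>))"
  unfolding spec_err_def using Re_imaginary_power_odd[of d \<eta>]
  by (simp add: Re_exp Im_exp)

lemma Im_spec_err:
  "Im (spec_err M d a \<eta>) =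
     (\<Sum>m\<in>{-int M..int M}. a m * sin (of_int m * \<eta>)) - Im ((\<i> * complex_of_real \<eta>) ^ d)"
  unfolding spec_err_def by (simp add: Re_exp Im_exp)

lemma continuous_on_spec_err: "continuous_on S (spec_err M d a)"
  unfolding spec_err_def by (intro continuous_intros)

lemma norm_spec_err_odd_part:
  assumes "odd d"
  shows "(cmod (spec_err M d a \<eta>))\<^sup>2 =
           (cmod (spec_err M d (odd_part a) \<eta>))\<^sup>2 + (Re (spec_err M d a \<eta>))\<^sup>2"
proof -
  have "Re (spec_err M d (odd_part a) \<eta>) = 0"
    unfolding Re_spec_err[OF assms]
    by (rule sum_odd_part_mult_even) simp
  moreover have "Im (spec_err M d (odd_part a) \<eta>) = Im (spec_err M d a \<eta>)"
    unfolding Im_spec_err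
    by (subst sum_odd_part_mult_odd) simp_all
  ultimately show ?thesis
    unfolding cmod_power2 by simp
qed

lemma absolutely_integrable_mult_continuous:
  fixes \<gamma> f :: "real \<Rightarrow> real"
  assumes "\<gamma> absolutely_integrable_on S" and "compact S" and "continuous_on S f"
  shows "(\<lambda>x. \<gamma> x * f x) absolutely_integrable_on S"
proof -
  have S: "S \<in> sets lebesgue"
    using assms(2) lmeasurable_compact fmeasurableD by blast
  have "(\<lambda>x. f x * \<gamma> x) absolutely_integrable_on S"
  proof (rule absolutely_integrable_bounded_measurable_product_real)
    show "f \<in> borel_measurable (lebesgue_on S)"
      using assms(3) S by (rule continuous_imp_measurable_on_sets_lebesgue)
    show "bounded (f ` S)"
      using assms compact_continuous_image compact_imp_bounded by blast
  qed (use assms S in auto)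
  then show ?thesis
    by (simp add: mult.commute)
qed

lemma negligible_nonzero_if_integral_eq_0:
  fixes h :: "'a::euclidean_space \<Rightarrow> real"
  assumes h: "h absolutely_integrable_on S" and nonneg: "\<And>x. x \<in> S \<Longrightarrow> 0 \<le> h x"
    and "integral S h = 0"
  shows "negligible {x \<in> S. h x \<noteq> 0}"
proof -
  have "set_lebesgue_integral lebesgue S h = 0"
    using assms set_lebesgue_integral_eq_integral(2)[OF h] by simp
  moreover have "integrable lebesgue (\<lambda>x. indicat_real S x *\<^sub>R h x)"
    using h by (simp add: set_integrable_def)
  ultimately have "AE x in lebesgue. indicat_real S x *\<^sub>R h x = 0"
    unfolding set_lebesgue_integral_def
    by (subst (asm) integral_nonneg_eq_0_iff_AE) (auto simp: indicator_def nonneg)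
  then obtain N where N: "{x \<in> space lebesgue. indicat_real S x *\<^sub>R h x \<noteq> 0} \<subseteq> N"
    and "emeasure lebesgue N = 0" and "N \<in> sets lebesgue"
    by (rule AE_E)
  then have "negligible N"
    using negligible_iff_emeasure0 by blast
  moreover have "{x \<in> S. h x \<noteq> 0} \<subseteq> N"
    using N by (auto simp: indicator_def)
  ultimately show ?thesis
    by (rule negligible_subset)
qed

lemma absolutely_integrable_weighted_spec_err:
  fixes \<gamma> :: "real \<Rightarrow> real" and \<phi> :: "complex \<Rightarrow> real"
  assumes "\<gamma> absolutely_integrable_on {0..pi}" and "continuous_on UNIV \<phi>"
  shows "(\<lambda>\<eta>. \<gamma> \<eta> * \<phi> (spec_err M d a \<eta>)) absolutely_integrable_on {0..pi}"
proof (rule absolutely_integrable_mult_continuous[OF assms(1)])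
  show "continuous_on {0..pi} (\<lambda>\<eta>. \<phi> (spec_err M d a \<eta>))"
    using assms(2) continuous_on_spec_err by (rule continuous_on_compose2) simp
qed simp

lemma weighted_error_odd_part:
  assumes "odd d" and \<gamma>: "\<gamma> absolutely_integrable_on {0..pi}"
  shows "weighted_error \<gamma> M d a =
           weighted_error \<gamma> M d (odd_part a) + integral {0..pi} (\<lambda>\<eta>. \<gamma> \<eta> * (Re (spec_err M d a \<eta>))\<^sup>2)"
proof -
  have "continuous_on UNIV (\<lambda>z. (cmod z)\<^sup>2)" and "continuous_on UNIV (\<lambda>z. (Re z)\<^sup>2)"
    by (intro continuous_intros)+
  from this[THEN absolutely_integrable_weighted_spec_err[OF \<gamma>]]
  have "(\<lambda>\<eta>. \<gamma> \<eta> * (cmod (spec_err M d (odd_part a) \<eta>))\<^sup>2) integrable_on {0..pi}"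
    and "(\<lambda>\<eta>. \<gamma> \<eta> * (Re (spec_err M d a \<eta>))\<^sup>2) integrable_on {0..pi}"
    by (simp_all add: set_lebesgue_integral_eq_integral(1))
  then show ?thesis
    unfolding weighted_error_def norm_spec_err_odd_part[OF assms(1), where M = M and a = a] distrib_left
    by (rule integral_add)
qed

theorem lemma2:
  fixes d p M :: nat and \<gamma> :: "real \<Rightarrow> real" and a :: "int \<Rightarrow> real"
  assumes "odd d" and "M \<ge> 1" and "2 * M + 1 \<ge> d + p + 1"
    and "\<gamma> integrable_on {0..pi}"
    and "\<And>\<eta>. \<eta> \<in> {0..pi} \<Longrightarrow> \<gamma> \<eta> \<ge> 0"
    and "emeasure lebesgue {\<eta> \<in> {0..pi}. \<gamma> \<eta> > 0} > 0"
    and "order_constraints M d p a"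
    and "\<And>b. order_constraints M d p b \<Longrightarrow> weighted_error \<gamma> M d a \<le> weighted_error \<gamma> M d b"
  shows "\<forall>\<eta>\<in>{0..pi}. Re (spec_err M d a \<eta>) = 0"
(* The size conditions on M only make the constraints feasible; the argument does not need them. *)
proof -
  let ?S = "{0..pi::real}"
  define h where "h \<eta> = \<gamma> \<eta> * (Re (spec_err M d a \<eta>))\<^sup>2" for \<eta>
  have \<gamma>_abs: "\<gamma> absolutely_integrable_on ?S"
    using assms(4,5) by (rule nonnegative_absolutely_integrable_1)
  have h_nonneg: "0 \<le> h \<eta>" if "\<eta> \<in> ?S" for \<eta>
    unfolding h_def using assms(5)[OF that] by simp
  have "continuous_on UNIV (\<lambda>z. (Re z)\<^sup>2)"
    by (intro continuous_intros)
  then have h_abs: "h absolutely_integrable_on ?S"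
    unfolding h_def by (rule absolutely_integrable_weighted_spec_err[OF \<gamma>_abs])
  have "integral ?S h \<le> 0"
    using assms(8)[OF order_constraints_odd_part[OF assms(1,7)]]
    unfolding weighted_error_odd_part[OF assms(1) \<gamma>_abs, of M a] h_def by simp
  moreover have "integral ?S h \<ge> 0"
    using set_lebesgue_integral_eq_integral(1)[OF h_abs] h_nonneg by (rule integral_nonneg)
  ultimately have "negligible {\<eta> \<in> ?S. h \<eta> \<noteq> 0}"
    using negligible_nonzero_if_integral_eq_0[OF h_abs h_nonneg] by simp
  then show ?thesis
    unfolding h_def Re_spec_err[OF assms(1)]
    using cosine_sum_eq_0_if_weighted_square_negligible[OF assms(6)] by blast
qed

end
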